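(* Let $A\in\mathbb{R}_+^{n\times n}$ have all entries strictly positive. Then the following are equivalent: (i) $\frac{1}{n}\sum_{i=1}^n\sum_{j=1}^n a_{i,j}=\max_{B\in\Omega(A)}\rho(B)$; (ii) either the all-ones vector $(1,\dots,1)^T$ is an eigenvector of $A$ for the eigenvalue $\rho(A)$ (equivalently, all row sums of $A$ are equal), or there exists a nonsingular nonnegative diagonal matrix $D=\mathrm{diag}(d_1,\dots,d_n)$ such that $DA$ is the all-ones matrix, i.e. $d_i a_{i,j}=1$ for all $i,j$; (iii) $\frac{1}{n}\sum_{i=1}^n\sum_{j=1}^n a_{i,j}=\min_{B\in\Omega(A)}\rho(B)$.
   Context: For $A=(a_{i,j})\in\mathbb{R}_+^{n\times n}$ (nonnegative $n\times n$ matrices), $\Omega(A)=\{B\in\mathbb{R}_+^{n\times n}:\ \forall i\ \exists\text{ a permutation }\phi_i\text{ of }\{1,\dots,n\}\text{ with } b_{i,j}=a_{i,\phi_i(j)}\ \forall j\}$, the set of matrices whose rows are rearrangements of the corresponding rows of $A$. $\rho(B)$ denotes the spectral radius (Perron root) of $B$. *)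

theory Defs
  imports "Jordan_Normal_Form.Spectral_Radius" "Jordan_Normal_Form.Determinant"
begin

definition Omega :: "nat \<Rightarrow> real mat \<Rightarrow> real mat set" where
  "Omega n A = {B \<in> carrier_mat n n. \<forall>i<n. \<exists>\<phi>. \<phi> permutes {..<n} \<and>
                   (\<forall>j<n. B $$ (i, j) = A $$ (i, \<phi> j))}"

definition rho :: "real mat \<Rightarrow> real" where
  "rho B = spectral_radius (map_mat complex_of_real B)"

end

theory Submission
  imports Defs
begin

text \<open>All matrices in \<open>\<Omega>(A)\<close> have the row sums \<open>r\<^sub>i\<close> of \<open>A\<close>. If these are all equal, or if
  every row of \<open>A\<close> (hence of every \<open>B \<in> \<Omega>(A)\<close>) is constant, then \<open>B\<close> has a positive
  eigenvector (the all-ones vector, resp. the vector of row values), so \<open>\<rho>(B)\<close> equals the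
  average \<open>(\<Sum>\<^sub>i r\<^sub>i) / n\<close> for every \<open>B\<close>. Otherwise, rearrange all rows of \<open>A\<close> along one
  column order that sorts \<open>r\<close> (resp. \<open>-r\<close>). Chebyshev's sum inequality, applied row by row,
  gives \<open>B r \<ge> avg \<cdot> r\<close> (resp. \<open>\<le>\<close>), strictly in some row, and the Collatz-Wielandt bounds
  for the positive matrix \<open>B\<close> put \<open>\<rho>(B)\<close> strictly above (resp. below) the average. Finally,
  \<open>DA\<close> is the all-ones matrix for a nonsingular diagonal \<open>D\<close> exactly when \<open>A\<close> has constant rows.\<close>

lemma index_mult_mat_sum:
  assumes "A \<in> carrier_mat n m" "B \<in> carrier_mat m p" "i < n" "j < p"
  shows "(A * B) $$ (i, j) = (\<Sum>k<m. A $$ (i, k) * B $$ (k, j))"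
  using assms by (simp add: scalar_prod_def atLeast0LessThan)

lemma index_mult_mat_vec_sum:
  assumes "A \<in> carrier_mat n m" "v \<in> carrier_vec m" "i < n"
  shows "(A *\<^sub>v v) $ i = (\<Sum>k<m. A $$ (i, k) * v $ k)"
  using assms by (simp add: scalar_prod_def atLeast0LessThan)

lemma eigenvalue_smult_mat:
  fixes A :: "'a :: comm_ring_1 mat"
  assumes A: "A \<in> carrier_mat n n" and ev: "eigenvalue A a"
  shows "eigenvalue (c \<cdot>\<^sub>m A) (c * a)"
proof -
  obtain v where v: "v \<in> carrier_vec n" "v \<noteq> 0\<^sub>v n" "A *\<^sub>v v = a \<cdot>\<^sub>v v"
    using ev A unfolding eigenvalue_def eigenvector_def by auto
  have "(c \<cdot>\<^sub>m A) *\<^sub>v v = (c * a) \<cdot>\<^sub>v v"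
  proof (rule eq_vecI)
    fix i assume "i < dim_vec ((c * a) \<cdot>\<^sub>v v)"
    hence i: "i < n" using v by simp
    have "(A *\<^sub>v v) $ i = a * v $ i" using v(3) i v(1) by (metis index_smult_vec(1) carrier_vecD)
    thus "((c \<cdot>\<^sub>m A) *\<^sub>v v) $ i = ((c * a) \<cdot>\<^sub>v v) $ i"
      using A v(1) i by (simp add: mult.assoc)
  qed (use A v in simp)
  thus ?thesis using A v unfolding eigenvalue_def eigenvector_def by auto
qed

section \<open>Spectral radius of nonnegative matrices\<close>

lemma rho_eq_eigenvalue_norm:
  assumes "B \<in> carrier_mat n n" "n > 0"
  obtains \<mu> where "eigenvalue (map_mat complex_of_real B) \<mu>" "rho B = cmod \<mu>"
  using spectral_radius_mem_max(1)[of "map_mat complex_of_real B" n] assms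
  unfolding rho_def spectrum_def by auto

lemma eigenvalue_norm_le_rho:
  assumes "B \<in> carrier_mat n n" "eigenvalue (map_mat complex_of_real B) \<mu>"
  shows "cmod \<mu> \<le> rho B"
proof -
  have "n > 0" using eigenvalue_imp_nonzero_dim assms by (metis map_carrier_mat)
  thus ?thesis using spectral_radius_mem_max(2)[of "map_mat complex_of_real B" n] assms
    unfolding rho_def spectrum_def by auto
qed

lemma rho_nonneg:
  assumes "B \<in> carrier_mat n n" "n > 0"
  shows "rho B \<ge> 0"
  using rho_eq_eigenvalue_norm[OF assms] by (metis norm_ge_zero)

lemma rho_smult:
  fixes B :: "real mat"
  assumes B: "B \<in> carrier_mat n n" and n: "n > 0" and c: "c > 0"
  shows "rho (c \<cdot>\<^sub>m B) = c * rho B"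
proof -
  have le: "rho (d \<cdot>\<^sub>m M) \<le> d * rho M" if M: "M \<in> carrier_mat n n" and d: "d > 0" for M d
  proof -
    obtain \<mu> where \<mu>: "eigenvalue (map_mat complex_of_real (d \<cdot>\<^sub>m M)) \<mu>" "rho (d \<cdot>\<^sub>m M) = cmod \<mu>"
      using rho_eq_eigenvalue_norm[of "d \<cdot>\<^sub>m M" n] M n by auto
    have "complex_of_real (1 / d) \<cdot>\<^sub>m map_mat complex_of_real (d \<cdot>\<^sub>m M) = map_mat complex_of_real M"
      using M d by (intro eq_matI) auto
    hence "eigenvalue (map_mat complex_of_real M) (complex_of_real (1 / d) * \<mu>)"
      using eigenvalue_smult_mat[of _ n, OF _ \<mu>(1)] M by (metis map_carrier_mat smult_carrier_mat)
    hence "cmod (complex_of_real (1 / d) * \<mu>) \<le> rho M" by (rule eigenvalue_norm_le_rho[OF M])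
    hence "cmod \<mu> / d \<le> rho M" using d by (simp add: norm_mult norm_divide)
    thus ?thesis using \<mu>(2) d by (simp add: divide_le_eq mult.commute)
  qed
  have "B = (1 / c) \<cdot>\<^sub>m (c \<cdot>\<^sub>m B)" using B c by (intro eq_matI) auto
  hence "rho B = rho ((1 / c) \<cdot>\<^sub>m (c \<cdot>\<^sub>m B))" by simp
  also have "\<dots> \<le> (1 / c) * rho (c \<cdot>\<^sub>m B)" using le[of "c \<cdot>\<^sub>m B" "1 / c"] B c by simp
  finally have "c * rho B \<le> rho (c \<cdot>\<^sub>m B)" using c by (simp add: field_simps)
  thus ?thesis using le[OF B c] by simp
qed

lemma eigenvalue_norm_le_weighted_row_sum:
  fixes B :: "real mat"
  assumes B: "B \<in> carrier_mat n n" and nonneg: "\<forall>i<n. \<forall>j<n. B $$ (i, j) \<ge> 0"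
    and x: "\<forall>i<n. x i > 0" and ev: "eigenvalue (map_mat complex_of_real B) \<mu>"
  obtains i where "i < n" "cmod \<mu> * x i \<le> (\<Sum>j<n. B $$ (i, j) * x j)"
proof -
  obtain v where v: "v \<in> carrier_vec n" "v \<noteq> 0\<^sub>v n" "map_mat complex_of_real B *\<^sub>v v = \<mu> \<cdot>\<^sub>v v"
    using ev B unfolding eigenvalue_def eigenvector_def by auto
  obtain j0 where j0: "j0 < n" "v $ j0 \<noteq> 0"
    using v(1,2) by (metis carrier_vecD eq_vecI index_zero_vec)
  \<comment> \<open>Look at the row where \<open>\<bar>v\<^sub>i\<bar> / x\<^sub>i\<close> is maximal.\<close>
  define S where "S = (\<lambda>i. cmod (v $ i) / x i) ` {..<n}"
  have S: "finite S" "S \<noteq> {}" using j0 unfolding S_def by auto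
  define M where "M = Max S"
  obtain i where i: "i < n" "M = cmod (v $ i) / x i"
    using Max_in[OF S] unfolding M_def S_def by auto
  have v_le: "cmod (v $ j) \<le> M * x j" if "j < n" for j
  proof -
    have "cmod (v $ j) / x j \<le> M" unfolding M_def using S that S_def by auto
    thus ?thesis using x that by (simp add: divide_le_eq mult.commute)
  qed
  have "0 < cmod (v $ j0) / x j0" using j0 x by auto
  also have "\<dots> \<le> M" unfolding M_def using S j0 S_def by auto
  finally have M: "M > 0" .
  have "\<mu> * v $ i = (\<Sum>k<n. complex_of_real (B $$ (i, k)) * v $ k)"
    using arg_cong[OF v(3), of "\<lambda>w. w $ i"] index_mult_mat_vec_sum[of _ n n v i] B v(1) i by auto
  hence "cmod \<mu> * cmod (v $ i) = cmod (\<Sum>k<n. complex_of_real (B $$ (i, k)) * v $ k)"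
    by (metis norm_mult)
  also have "\<dots> \<le> (\<Sum>k<n. cmod (complex_of_real (B $$ (i, k)) * v $ k))"
    by (rule norm_sum)
  also have "\<dots> = (\<Sum>k<n. B $$ (i, k) * cmod (v $ k))"
    using nonneg i by (intro sum.cong) (auto simp: norm_mult)
  also have "\<dots> \<le> (\<Sum>k<n. B $$ (i, k) * (M * x k))"
    using nonneg i v_le by (intro sum_mono mult_left_mono) auto
  also have "\<dots> = M * (\<Sum>k<n. B $$ (i, k) * x k)"
    by (simp add: sum_distrib_left algebra_simps)
  finally have "cmod \<mu> * (M * x i) \<le> M * (\<Sum>k<n. B $$ (i, k) * x k)"
    using i x by simp
  hence "cmod \<mu> * x i \<le> (\<Sum>k<n. B $$ (i, k) * x k)" using M by (simp add: algebra_simps)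
  thus thesis using i that by auto
qed

lemma rho_le_of_subinvariant:
  fixes B :: "real mat"
  assumes B: "B \<in> carrier_mat n n" and nonneg: "\<forall>i<n. \<forall>j<n. B $$ (i, j) \<ge> 0"
    and x: "\<forall>i<n. x i > 0" and n: "n > 0"
    and sub: "\<forall>i<n. (\<Sum>j<n. B $$ (i, j) * x j) \<le> s * x i"
  shows "rho B \<le> s"
proof -
  obtain \<mu> where \<mu>: "eigenvalue (map_mat complex_of_real B) \<mu>" "rho B = cmod \<mu>"
    using rho_eq_eigenvalue_norm[OF B n] .
  obtain i where i: "i < n" "cmod \<mu> * x i \<le> (\<Sum>j<n. B $$ (i, j) * x j)"
    using eigenvalue_norm_le_weighted_row_sum[OF B nonneg x \<mu>(1)] .
  hence "cmod \<mu> * x i \<le> s * x i" using sub by force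
  moreover have "x i > 0" using x i(1) by simp
  ultimately show ?thesis using \<mu>(2) by (simp add: mult_le_cancel_right)
qed

lemma rho_less_of_strict_subinvariant:
  fixes B :: "real mat"
  assumes B: "B \<in> carrier_mat n n" and nonneg: "\<forall>i<n. \<forall>j<n. B $$ (i, j) \<ge> 0"
    and x: "\<forall>i<n. x i > 0" and n: "n > 0"
    and sub: "\<forall>i<n. (\<Sum>j<n. B $$ (i, j) * x j) < s * x i"
  shows "rho B < s"
proof -
  obtain \<mu> where \<mu>: "eigenvalue (map_mat complex_of_real B) \<mu>" "rho B = cmod \<mu>"
    using rho_eq_eigenvalue_norm[OF B n] .
  obtain i where i: "i < n" "cmod \<mu> * x i \<le> (\<Sum>j<n. B $$ (i, j) * x j)"
    using eigenvalue_norm_le_weighted_row_sum[OF B nonneg x \<mu>(1)] .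
  hence "cmod \<mu> * x i < s * x i" using sub by force
  moreover have "x i > 0" using x i(1) by simp
  ultimately show ?thesis using \<mu>(2) by (simp add: mult_less_cancel_right)
qed

lemma pow_mat_nonneg:
  fixes B :: "real mat"
  assumes B: "B \<in> carrier_mat n n" and nonneg: "\<forall>i<n. \<forall>j<n. B $$ (i, j) \<ge> 0"
  shows "\<forall>i<n. \<forall>j<n. (B ^\<^sub>m k) $$ (i, j) \<ge> 0"
proof (induction k)
  case 0
  then show ?case using B by auto
next
  case (Suc k)
  have "(B ^\<^sub>m Suc k) $$ (i, j) = (\<Sum>l<n. (B ^\<^sub>m k) $$ (i, l) * B $$ (l, j))"
    if "i < n" "j < n" for i j
    using index_mult_mat_sum[OF pow_carrier_mat[OF B] B that] by simp
  then show ?case using Suc nonneg by (auto intro!: sum_nonneg)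
qed

lemma pow_mat_superinvariant:
  fixes B :: "real mat"
  assumes B: "B \<in> carrier_mat n n" and nonneg: "\<forall>i<n. \<forall>j<n. B $$ (i, j) \<ge> 0"
    and q: "q \<ge> 0" and super: "\<forall>i<n. q * x i \<le> (\<Sum>j<n. B $$ (i, j) * x j)"
  shows "\<forall>i<n. q ^ k * x i \<le> (\<Sum>j<n. (B ^\<^sub>m k) $$ (i, j) * x j)"
proof (induction k)
  case 0
  have "(\<Sum>j<n. (B ^\<^sub>m 0) $$ (i, j) * x j) = (\<Sum>j<n. if i = j then x j else 0)" if "i < n" for i
    using B that by (intro sum.cong) auto
  then show ?case by simp
next
  case (Suc k)
  have nonneg_k: "\<forall>i<n. \<forall>j<n. (B ^\<^sub>m k) $$ (i, j) \<ge> 0" by (rule pow_mat_nonneg[OF B nonneg])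
  show ?case
  proof (intro allI impI)
    fix i assume i: "i < n"
    have "q ^ Suc k * x i \<le> q * (\<Sum>l<n. (B ^\<^sub>m k) $$ (i, l) * x l)"
      using Suc i q by (simp add: mult_left_mono mult.assoc)
    also have "\<dots> = (\<Sum>l<n. (B ^\<^sub>m k) $$ (i, l) * (q * x l))"
      by (simp add: sum_distrib_left algebra_simps)
    also have "\<dots> \<le> (\<Sum>l<n. (B ^\<^sub>m k) $$ (i, l) * (\<Sum>j<n. B $$ (l, j) * x j))"
      using nonneg_k i super by (intro sum_mono mult_left_mono) auto
    also have "\<dots> = (\<Sum>l<n. \<Sum>j<n. (B ^\<^sub>m k) $$ (i, l) * B $$ (l, j) * x j)"
      by (simp add: sum_distrib_left mult.assoc)
    also have "\<dots> = (\<Sum>j<n. (\<Sum>l<n. (B ^\<^sub>m k) $$ (i, l) * B $$ (l, j)) * x j)"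
      by (subst sum.swap) (simp add: sum_distrib_right)
    also have "\<dots> = (\<Sum>j<n. (B ^\<^sub>m Suc k) $$ (i, j) * x j)"
      using index_mult_mat_sum[OF pow_carrier_mat[OF B, of k] B] i by (intro sum.cong) auto
    finally show "q ^ Suc k * x i \<le> (\<Sum>j<n. (B ^\<^sub>m Suc k) $$ (i, j) * x j)" .
  qed
qed

lemma pow_mat_bounded_of_rho_less_1:
  fixes B :: "real mat"
  assumes B: "B \<in> carrier_mat n n" and rho: "rho B < 1"
  obtains c where "\<And>k i j. i < n \<Longrightarrow> j < n \<Longrightarrow> (B ^\<^sub>m k) $$ (i, j) \<le> c"
proof -
  obtain c where c: "\<And>k. norm_bound (map_mat complex_of_real B ^\<^sub>m k) c"
    using spectral_radius_jnf_norm_bound_less_1_upper_triangular[of _ n] B rho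
    unfolding rho_def by (metis map_carrier_mat)
  have "(B ^\<^sub>m k) $$ (i, j) \<le> c" if "i < n" "j < n" for k i j
  proof -
    have "norm (map_mat complex_of_real (B ^\<^sub>m k) $$ (i, j)) \<le> c"
      using c[of k] that B unfolding of_real_hom.mat_hom_pow[OF B] norm_bound_def by auto
    thus ?thesis using that B by auto
  qed
  thus thesis using that by blast
qed

lemma rho_ge_of_superinvariant:
  fixes B :: "real mat"
  assumes B: "B \<in> carrier_mat n n" and nonneg: "\<forall>i<n. \<forall>j<n. B $$ (i, j) \<ge> 0"
    and x: "\<forall>i<n. x i > 0" and n: "n > 0"
    and super: "\<forall>i<n. s * x i \<le> (\<Sum>j<n. B $$ (i, j) * x j)"
  shows "s \<le> rho B"
proof (rule ccontr)
  \<comment> \<open>For \<open>\<rho>(B) < t < s\<close> the powers of \<open>B/t\<close> stay bounded, while \<open>(B/t)\<^sup>k x \<ge> (s/t)\<^sup>k x\<close> grows.\<close>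
  assume "\<not> s \<le> rho B"
  define t where "t = (rho B + s) / 2"
  have t: "0 < t" "rho B < t" "t < s"
    using \<open>\<not> s \<le> rho B\<close> rho_nonneg[OF B n] unfolding t_def by auto
  define D where "D = (1 / t) \<cdot>\<^sub>m B"
  have D: "D \<in> carrier_mat n n" using B unfolding D_def by simp
  have "rho D < 1" using rho_smult[OF B n, of "1 / t"] t unfolding D_def by simp
  then obtain c where c: "\<And>k i j. i < n \<Longrightarrow> j < n \<Longrightarrow> (D ^\<^sub>m k) $$ (i, j) \<le> c"
    using pow_mat_bounded_of_rho_less_1[OF D] by blast
  have D_nonneg: "\<forall>i<n. \<forall>j<n. D $$ (i, j) \<ge> 0" using B nonneg t unfolding D_def by simp
  have "(\<Sum>j<n. D $$ (i, j) * x j) = (\<Sum>j<n. B $$ (i, j) * x j) / t" if "i < n" for i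
    using B that unfolding D_def by (simp add: sum_divide_distrib)
  hence "\<forall>i<n. s / t * x i \<le> (\<Sum>j<n. D $$ (i, j) * x j)"
    using super t by (simp add: divide_right_mono)
  moreover have "0 \<le> s / t" using t by simp
  ultimately have grow: "(s / t) ^ k * x 0 \<le> (\<Sum>j<n. (D ^\<^sub>m k) $$ (0, j) * x j)" for k
    using pow_mat_superinvariant[OF D D_nonneg] n by blast
  have bounded: "(\<Sum>j<n. (D ^\<^sub>m k) $$ (0, j) * x j) \<le> c * (\<Sum>j<n. x j)" for k
    unfolding sum_distrib_left using c n x by (intro sum_mono mult_right_mono) auto
  obtain k where "c * (\<Sum>j<n. x j) / x 0 < (s / t) ^ k"
    using real_arch_pow[of "s / t"] t by auto
  hence "c * (\<Sum>j<n. x j) < (s / t) ^ k * x 0" using x n by (simp add: divide_less_eq)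
  thus False using grow[of k] bounded[of k] by simp
qed

lemma rho_greater_of_strict_superinvariant:
  fixes B :: "real mat"
  assumes B: "B \<in> carrier_mat n n" and nonneg: "\<forall>i<n. \<forall>j<n. B $$ (i, j) \<ge> 0"
    and x: "\<forall>i<n. x i > 0" and n: "n > 0"
    and super: "\<forall>i<n. s * x i < (\<Sum>j<n. B $$ (i, j) * x j)"
  shows "s < rho B"
proof -
  define s' where "s' = Min ((\<lambda>i. (\<Sum>j<n. B $$ (i, j) * x j) / x i) ` {..<n})"
  have "s < s'" unfolding s'_def using n super x by (subst Min_gr_iff) (auto simp: less_divide_eq)
  moreover have "s' \<le> rho B"
  proof (rule rho_ge_of_superinvariant[OF B nonneg x n], intro allI impI)
    fix i assume i: "i < n"
    have "s' \<le> (\<Sum>j<n. B $$ (i, j) * x j) / x i" unfolding s'_def using i by auto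
    thus "s' * x i \<le> (\<Sum>j<n. B $$ (i, j) * x j)" using x i by (simp add: le_divide_eq)
  qed
  ultimately show ?thesis by simp
qed

lemma rho_eq_of_positive_eigenvector:
  fixes B :: "real mat"
  assumes B: "B \<in> carrier_mat n n" and nonneg: "\<forall>i<n. \<forall>j<n. B $$ (i, j) \<ge> 0"
    and x: "\<forall>i<n. x i > 0" and n: "n > 0"
    and eigen: "\<forall>i<n. (\<Sum>j<n. B $$ (i, j) * x j) = s * x i"
  shows "rho B = s"
  using rho_le_of_subinvariant[OF B nonneg x n] rho_ge_of_superinvariant[OF B nonneg x n] eigen
  by (simp add: order_antisym)

section \<open>Similarly ordered sequences\<close>

definition similarly_ordered :: "nat \<Rightarrow> (nat \<Rightarrow> real) \<Rightarrow> (nat \<Rightarrow> real) \<Rightarrow> bool" where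
  "similarly_ordered n a b \<longleftrightarrow> (\<forall>j<n. \<forall>k<n. 0 \<le> (a j - a k) * (b j - b k))"

lemma chebyshev_sum_identity:
  fixes a b :: "nat \<Rightarrow> real"
  shows "(\<Sum>j<n. \<Sum>k<n. (a j - a k) * (b j - b k))
     = 2 * (real n * (\<Sum>j<n. a j * b j) - (\<Sum>j<n. a j) * (\<Sum>j<n. b j))"
  by (simp only: one_add_one[symmetric] algebra_simps)
    (simp add: algebra_simps sum_subtractf sum.distrib sum.swap[of "\<lambda>i j. a i * b j"]
      sum_distrib_left)

lemma similarly_ordered_chebyshev:
  assumes "similarly_ordered n a b"
  shows "(\<Sum>j<n. a j) * (\<Sum>j<n. b j) \<le> real n * (\<Sum>j<n. a j * b j)"
proof -
  have "0 \<le> (\<Sum>j<n. \<Sum>k<n. (a j - a k) * (b j - b k))"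
    using assms unfolding similarly_ordered_def by (intro sum_nonneg) auto
  thus ?thesis unfolding chebyshev_sum_identity by simp
qed

lemma similarly_ordered_chebyshev_strict:
  assumes ord: "similarly_ordered n a b" and jk: "j < n" "k < n" "a j \<noteq> a k" "b j \<noteq> b k"
  shows "(\<Sum>j<n. a j) * (\<Sum>j<n. b j) < real n * (\<Sum>j<n. a j * b j)"
proof -
  have nonneg: "0 \<le> (a j' - a k') * (b j' - b k')" if "j' < n" "k' < n" for j' k'
    using ord that unfolding similarly_ordered_def by blast
  have "0 < (a j - a k) * (b j - b k)"
    using nonneg[OF jk(1,2)] jk(3,4) by (simp add: order_less_le)
  hence inner: "0 < (\<Sum>k'<n. (a j - a k') * (b j - b k'))"
    using jk nonneg by (intro sum_pos2[of _ k]) auto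
  have "0 < (\<Sum>j'<n. \<Sum>k'<n. (a j' - a k') * (b j' - b k'))"
    using sum_pos2[of "{..<n}" j "\<lambda>j'. \<Sum>k'<n. (a j' - a k') * (b j' - b k')"] inner jk nonneg
    by (auto intro: sum_nonneg)
  thus ?thesis unfolding chebyshev_sum_identity by simp
qed

lemma exists_sorting_permutation:
  fixes f :: "nat \<Rightarrow> 'a :: linorder"
  obtains \<sigma> where "\<sigma> permutes {..<n}" "\<And>i j. i \<le> j \<Longrightarrow> j < n \<Longrightarrow> f (\<sigma> i) \<le> f (\<sigma> j)"
proof -
  define ys where "ys = sort_key f [0..<n]"
  have len: "length ys = n" and dis: "distinct ys" and set_ys: "set ys = {..<n}"
    unfolding ys_def by auto
  have sorted: "sorted (map f ys)" unfolding ys_def by (rule sorted_sort_key)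
  define \<sigma> where "\<sigma> = (\<lambda>i. if i < n then ys ! i else i)"
  have "bij_betw ((!) ys) {..<n} {..<n}" using bij_betw_nth[OF dis] len set_ys by auto
  hence "bij_betw \<sigma> {..<n} {..<n}" unfolding \<sigma>_def
    by (rule bij_betw_cong[THEN iffD1, rotated]) auto
  hence "\<sigma> permutes {..<n}" by (rule bij_imp_permutes) (auto simp: \<sigma>_def)
  moreover have "f (\<sigma> i) \<le> f (\<sigma> j)" if "i \<le> j" "j < n" for i j
    using sorted_nth_mono[OF sorted that(1)] that len unfolding \<sigma>_def by auto
  ultimately show thesis using that by blast
qed

lemma common_nonconstant_pair:
  fixes a b :: "nat \<Rightarrow> real"
  assumes "j0 < n" "k0 < n" "a j0 \<noteq> a k0" "j1 < n" "k1 < n" "b j1 \<noteq> b k1"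
  obtains j k where "j < n" "k < n" "a j \<noteq> a k" "b j \<noteq> b k"
proof -
  have "\<exists>j<n. \<exists>k<n. a j \<noteq> a k \<and> b j \<noteq> b k"
  proof (rule ccontr)
    assume "\<not> ?thesis"
    hence H: "\<And>j k. j < n \<Longrightarrow> k < n \<Longrightarrow> a j \<noteq> a k \<Longrightarrow> b j = b k" by blast
    \<comment> \<open>Every index is \<open>a\<close>-separated from \<open>j0\<close> or from \<open>k0\<close>, so \<open>b\<close> would be constant.\<close>
    have "b m = b j0" if "m < n" for m
      using H[OF that assms(1)] H[OF that assms(2)] H[OF assms(1-3)] assms(3) by metis
    thus False using assms(4-6) by metis
  qed
  thus thesis using that by blast
qed

section \<open>The set \<open>\<Omega>(A)\<close>\<close>

lemma Omega_carrier: "B \<in> Omega n A \<Longrightarrow> B \<in> carrier_mat n n"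
  unfolding Omega_def by auto

lemma Omega_rowE:
  assumes "B \<in> Omega n A" "i < n"
  obtains \<phi> where "\<phi> permutes {..<n}" "\<And>j. j < n \<Longrightarrow> B $$ (i, j) = A $$ (i, \<phi> j)"
  using assms unfolding Omega_def by auto

lemma self_in_Omega: "A \<in> carrier_mat n n \<Longrightarrow> A \<in> Omega n A"
  unfolding Omega_def by (auto intro!: exI[of _ id])

lemma Omega_entry_pos:
  assumes "B \<in> Omega n A" "\<forall>i<n. \<forall>j<n. A $$ (i, j) > 0" "i < n" "j < n"
  shows "B $$ (i, j) > 0"
proof -
  obtain \<phi> where \<phi>: "\<phi> permutes {..<n}" "\<And>j. j < n \<Longrightarrow> B $$ (i, j) = A $$ (i, \<phi> j)"
    using Omega_rowE[OF assms(1,3)] by blast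
  thus ?thesis using permutes_in_image[OF \<phi>(1)] assms by simp
qed

lemma Omega_row_sum:
  assumes "B \<in> Omega n A" "i < n"
  shows "(\<Sum>j<n. B $$ (i, j)) = (\<Sum>j<n. A $$ (i, j))"
proof -
  obtain \<phi> where \<phi>: "\<phi> permutes {..<n}" "\<And>j. j < n \<Longrightarrow> B $$ (i, j) = A $$ (i, \<phi> j)"
    using Omega_rowE[OF assms] by blast
  have "(\<Sum>j<n. B $$ (i, j)) = (\<Sum>j<n. ((\<lambda>j. A $$ (i, j)) \<circ> \<phi>) j)"
    using \<phi>(2) by (intro sum.cong) auto
  also have "\<dots> = (\<Sum>j<n. A $$ (i, j))" using sum.permute[OF \<phi>(1), symmetric] by simp
  finally show ?thesis .
qed

lemma Omega_row_entry_surj: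
  assumes "B \<in> Omega n A" "i < n" "m < n"
  obtains j where "j < n" "B $$ (i, j) = A $$ (i, m)"
proof -
  obtain \<phi> where \<phi>: "\<phi> permutes {..<n}" "\<And>j. j < n \<Longrightarrow> B $$ (i, j) = A $$ (i, \<phi> j)"
    using Omega_rowE[OF assms(1,2)] by blast
  have "m \<in> \<phi> ` {..<n}" using permutes_image[OF \<phi>(1)] assms(3) by simp
  thus thesis using \<phi>(2) that by auto
qed

lemma finite_Omega: "finite (Omega n A)"
proof -
  let ?I = "{..<n} \<times> {..<n}"
  have "Omega n A \<subseteq> (\<lambda>f. mat n n f) ` (PiE ?I (\<lambda>_. (\<lambda>ij. A $$ ij) ` ?I))"
  proof
    fix B assume B: "B \<in> Omega n A"
    define f where "f = (\<lambda>ij. if ij \<in> ?I then B $$ ij else undefined)"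
    have "f \<in> PiE ?I (\<lambda>_. (\<lambda>ij. A $$ ij) ` ?I)"
    proof (rule PiE_I)
      fix ij assume "ij \<in> ?I"
      then obtain i j where ij: "ij = (i, j)" "i < n" "j < n" by auto
      obtain \<phi> where \<phi>: "\<phi> permutes {..<n}" "\<And>j. j < n \<Longrightarrow> B $$ (i, j) = A $$ (i, \<phi> j)"
        using Omega_rowE[OF B ij(2)] by blast
      show "f ij \<in> (\<lambda>ij. A $$ ij) ` ?I"
        using ij \<phi>(2) permutes_in_image[OF \<phi>(1)] unfolding f_def by force
    qed (simp add: f_def)
    moreover have "B = mat n n f"
      using Omega_carrier[OF B] by (intro eq_matI) (auto simp: f_def)
    ultimately show "B \<in> (\<lambda>f. mat n n f) ` (PiE ?I (\<lambda>_. (\<lambda>ij. A $$ ij) ` ?I))" by blast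
  qed
  moreover have "finite (PiE ?I (\<lambda>_. (\<lambda>ij. A $$ ij) ` ?I))" by (intro finite_PiE) auto
  ultimately show ?thesis by (meson finite_imageI finite_subset)
qed

lemma Omega_similarly_ordered:
  assumes A: "A \<in> carrier_mat n n"
  obtains B where "B \<in> Omega n A" "\<And>i. i < n \<Longrightarrow> similarly_ordered n (\<lambda>j. B $$ (i, j)) w"
proof -
  obtain \<sigma> where \<sigma>: "\<sigma> permutes {..<n}" "\<And>p q. p \<le> q \<Longrightarrow> q < n \<Longrightarrow> w (\<sigma> p) \<le> w (\<sigma> q)"
    using exists_sorting_permutation[of n w] by blast
  have "\<forall>i. \<exists>\<tau>. \<tau> permutes {..<n} \<and> (\<forall>p q. p \<le> q \<longrightarrow> q < n \<longrightarrow> A $$ (i, \<tau> p) \<le> A $$ (i, \<tau> q))"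
  proof
    fix i show "\<exists>\<tau>. \<tau> permutes {..<n} \<and> (\<forall>p q. p \<le> q \<longrightarrow> q < n \<longrightarrow> A $$ (i, \<tau> p) \<le> A $$ (i, \<tau> q))"
      by (rule exists_sorting_permutation[of n "\<lambda>j. A $$ (i, j)"]) auto
  qed
  then obtain \<tau> where "\<forall>i. \<tau> i permutes {..<n} \<and>
      (\<forall>p q. p \<le> q \<longrightarrow> q < n \<longrightarrow> A $$ (i, \<tau> i p) \<le> A $$ (i, \<tau> i q))"
    by (rule choice[THEN exE])
  hence \<tau>: "\<And>i. \<tau> i permutes {..<n}"
    "\<And>i p q. p \<le> q \<Longrightarrow> q < n \<Longrightarrow> A $$ (i, \<tau> i p) \<le> A $$ (i, \<tau> i q)"
    by blast+
  define \<sigma>' where "\<sigma>' = inv_into UNIV \<sigma>"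
  have \<sigma>': "\<sigma>' permutes {..<n}" "\<And>j. \<sigma> (\<sigma>' j) = j"
    unfolding \<sigma>'_def using permutes_inv[OF \<sigma>(1)] permutes_inverses(1)[OF \<sigma>(1)] by auto
  \<comment> \<open>Row \<open>i\<close> of \<open>B\<close> carries the entries of row \<open>i\<close> of \<open>A\<close> in increasing order,
    placed in the columns taken in increasing order of \<open>w\<close>.\<close>
  define B where "B = mat n n (\<lambda>(i, j). A $$ (i, \<tau> i (\<sigma>' j)))"
  have "B \<in> Omega n A"
    unfolding Omega_def
  proof (intro CollectI conjI allI impI)
    show "B \<in> carrier_mat n n" unfolding B_def by simp
    fix i assume "i < n"
    thus "\<exists>\<phi>. \<phi> permutes {..<n} \<and> (\<forall>j<n. B $$ (i, j) = A $$ (i, \<phi> j))"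
      using permutes_compose[OF \<sigma>'(1) \<tau>(1)] unfolding B_def by (intro exI[of _ "\<tau> i \<circ> \<sigma>'"]) simp
  qed
  moreover have "similarly_ordered n (\<lambda>j. B $$ (i, j)) w" if i: "i < n" for i
    unfolding similarly_ordered_def
  proof (intro allI impI)
    fix j k assume jk: "j < n" "k < n"
    have B_\<sigma>: "B $$ (i, \<sigma> p) = A $$ (i, \<tau> i p)" if "p < n" for p
      using that i permutes_in_image[OF \<sigma>(1)] permutes_inverses(2)[OF \<sigma>(1)]
      unfolding B_def \<sigma>'_def by simp
    have mono: "B $$ (i, \<sigma> p) \<le> B $$ (i, \<sigma> q) \<and> w (\<sigma> p) \<le> w (\<sigma> q)"
      if "p \<le> q" "q < n" for p q
      using \<tau>(2)[OF that] \<sigma>(2)[OF that] B_\<sigma> that by simp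
    have jk': "\<sigma>' j < n" "\<sigma>' k < n" using jk permutes_in_image[OF \<sigma>'(1)] by auto
    consider "\<sigma>' j \<le> \<sigma>' k" | "\<sigma>' k \<le> \<sigma>' j" by linarith
    thus "0 \<le> (B $$ (i, j) - B $$ (i, k)) * (w j - w k)"
    proof cases
      case 1
      hence "B $$ (i, j) \<le> B $$ (i, k)" "w j \<le> w k" using mono[OF 1 jk'(2)] \<sigma>'(2) by simp_all
      thus ?thesis by (simp add: mult_nonpos_nonpos)
    next
      case 2
      hence "B $$ (i, k) \<le> B $$ (i, j)" "w k \<le> w j" using mono[OF 2 jk'(1)] \<sigma>'(2) by simp_all
      thus ?thesis by simp
    qed
  qed
  ultimately show thesis using that by blast
qed

section \<open>The spectral radius on \<open>\<Omega>(A)\<close>\<close>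

definition equal_row_sums :: "nat \<Rightarrow> real mat \<Rightarrow> bool" where
  "equal_row_sums n A \<longleftrightarrow> (\<forall>i<n. \<forall>i'<n. (\<Sum>j<n. A $$ (i, j)) = (\<Sum>j<n. A $$ (i', j)))"

definition constant_rows :: "nat \<Rightarrow> real mat \<Rightarrow> bool" where
  "constant_rows n A \<longleftrightarrow> (\<forall>i<n. \<forall>j<n. \<forall>k<n. A $$ (i, j) = A $$ (i, k))"

lemma rho_eq_row_sum:
  fixes B :: "real mat"
  assumes B: "B \<in> carrier_mat n n" and nonneg: "\<forall>i<n. \<forall>j<n. B $$ (i, j) \<ge> 0" and n: "n > 0"
    and rows: "\<forall>i<n. (\<Sum>j<n. B $$ (i, j)) = r"
  shows "rho B = r"
  by (rule rho_eq_of_positive_eigenvector[OF B nonneg _ n, of "\<lambda>_. 1"]) (use rows in simp_all)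

lemma rho_constant_rows:
  fixes B :: "real mat"
  assumes B: "B \<in> carrier_mat n n" and pos: "\<forall>i<n. \<forall>j<n. B $$ (i, j) > 0" and n: "n > 0"
    and const: "constant_rows n B"
  shows "rho B = (\<Sum>i<n. B $$ (i, 0))"
proof -
  have nonneg: "\<forall>i<n. \<forall>j<n. B $$ (i, j) \<ge> 0" using pos by (simp add: less_imp_le)
  have x: "\<forall>i<n. B $$ (i, 0) > 0" using pos n by simp
  have "(\<Sum>j<n. B $$ (i, j) * B $$ (j, 0)) = (\<Sum>j<n. B $$ (j, 0)) * B $$ (i, 0)"
    if i: "i < n" for i
  proof -
    have "(\<Sum>j<n. B $$ (i, j) * B $$ (j, 0)) = (\<Sum>j<n. B $$ (i, 0) * B $$ (j, 0))"
      using const i n unfolding constant_rows_def by (intro sum.cong) (simp, metis lessThan_iff)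
    thus ?thesis by (simp add: sum_distrib_left mult.commute)
  qed
  thus ?thesis by (intro rho_eq_of_positive_eigenvector[OF B nonneg x n] allI impI)
qed

lemma Omega_constant_rows:
  assumes "B \<in> Omega n A" "constant_rows n A"
  shows "constant_rows n B"
  unfolding constant_rows_def
proof (intro allI impI)
  fix i j k assume ijk: "i < n" "j < n" "k < n"
  obtain \<phi> where \<phi>: "\<phi> permutes {..<n}" "\<And>j. j < n \<Longrightarrow> B $$ (i, j) = A $$ (i, \<phi> j)"
    using Omega_rowE[OF assms(1) ijk(1)] by blast
  have "\<phi> j < n" "\<phi> k < n" using ijk permutes_in_image[OF \<phi>(1)] by auto
  thus "B $$ (i, j) = B $$ (i, k)"
    using assms(2) ijk \<phi>(2) unfolding constant_rows_def by metis
qed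

lemma rho_Omega_eq_average:
  fixes A :: "real mat"
  assumes A: "A \<in> carrier_mat n n" and pos: "\<forall>i<n. \<forall>j<n. A $$ (i, j) > 0" and n: "n > 0"
    and cases: "equal_row_sums n A \<or> constant_rows n A" and B: "B \<in> Omega n A"
  shows "rho B = (\<Sum>i<n. \<Sum>j<n. A $$ (i, j)) / real n"
proof -
  have B_carrier: "B \<in> carrier_mat n n" using Omega_carrier[OF B] .
  have B_pos: "\<forall>i<n. \<forall>j<n. B $$ (i, j) > 0" using Omega_entry_pos[OF B pos] by blast
  have sums: "(\<Sum>i<n. \<Sum>j<n. A $$ (i, j)) = (\<Sum>i<n. \<Sum>j<n. B $$ (i, j))"
    using Omega_row_sum[OF B] by simp
  from cases show ?thesis
  proof
    assume equal: "equal_row_sums n A"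
    have rows: "\<forall>i<n. (\<Sum>j<n. B $$ (i, j)) = (\<Sum>j<n. A $$ (0, j))"
    proof (intro allI impI)
      fix i assume i: "i < n"
      have "(\<Sum>j<n. A $$ (i, j)) = (\<Sum>j<n. A $$ (0, j))"
        using equal i n unfolding equal_row_sums_def by blast
      thus "(\<Sum>j<n. B $$ (i, j)) = (\<Sum>j<n. A $$ (0, j))" using Omega_row_sum[OF B i] by simp
    qed
    hence "rho B = (\<Sum>j<n. A $$ (0, j))"
      using rho_eq_row_sum[OF B_carrier _ n] B_pos by (simp add: less_imp_le)
    thus ?thesis using sums rows n by simp
  next
    assume "constant_rows n A"
    hence const: "constant_rows n B" by (rule Omega_constant_rows[OF B])
    have "(\<Sum>j<n. B $$ (i, j)) = (\<Sum>j<n. B $$ (i, 0))" if "i < n" for i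
      using const n that unfolding constant_rows_def by (intro sum.cong) (simp, metis lessThan_iff)
    hence "(\<Sum>i<n. \<Sum>j<n. B $$ (i, j)) = real n * (\<Sum>i<n. B $$ (i, 0))"
      by (simp add: sum_distrib_left)
    thus ?thesis using rho_constant_rows[OF B_carrier B_pos n const] sums n by simp
  qed
qed

lemma Omega_chebyshev:
  fixes A :: "real mat" and w :: "nat \<Rightarrow> real"
  assumes A: "A \<in> carrier_mat n n" and nonconst: "\<not> constant_rows n A"
    and w: "j0 < n" "k0 < n" "w j0 \<noteq> w k0"
  obtains B i0 where "B \<in> Omega n A" "i0 < n"
    "\<And>i. i < n \<Longrightarrow> (\<Sum>j<n. B $$ (i, j)) * (\<Sum>j<n. w j) \<le> real n * (\<Sum>j<n. B $$ (i, j) * w j)"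
    "(\<Sum>j<n. B $$ (i0, j)) * (\<Sum>j<n. w j) < real n * (\<Sum>j<n. B $$ (i0, j) * w j)"
proof -
  obtain B where B: "B \<in> Omega n A" and ord: "\<And>i. i < n \<Longrightarrow> similarly_ordered n (\<lambda>j. B $$ (i, j)) w"
    using Omega_similarly_ordered[OF A] by blast
  obtain i0 j k where ijk: "i0 < n" "j < n" "k < n" "A $$ (i0, j) \<noteq> A $$ (i0, k)"
    using nonconst unfolding constant_rows_def by blast
  obtain j' k' where "j' < n" "k' < n" "B $$ (i0, j') \<noteq> B $$ (i0, k')"
    using Omega_row_entry_surj[OF B ijk(1,2)] Omega_row_entry_surj[OF B ijk(1,3)] ijk(4) by metis
  then obtain j1 k1 where "j1 < n" "k1 < n" "B $$ (i0, j1) \<noteq> B $$ (i0, k1)" "w j1 \<noteq> w k1"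
    using common_nonconstant_pair[of j' n k' "\<lambda>j. B $$ (i0, j)", OF _ _ _ w] by blast
  thus thesis
    using that[OF B ijk(1)] similarly_ordered_chebyshev[OF ord]
      similarly_ordered_chebyshev_strict[OF ord[OF ijk(1)]] by blast
qed

lemma rho_greater_of_superinvariant_positive:
  fixes B :: "real mat"
  assumes B: "B \<in> carrier_mat n n" and pos: "\<forall>i<n. \<forall>j<n. B $$ (i, j) > 0"
    and x: "\<forall>i<n. x i > 0" and n: "n > 0"
    and super: "\<forall>i<n. s * x i \<le> (\<Sum>j<n. B $$ (i, j) * x j)"
    and strict: "i0 < n" "s * x i0 < (\<Sum>j<n. B $$ (i0, j) * x j)"
  shows "s < rho B"
proof -
  \<comment> \<open>Since \<open>B > 0\<close>, one more application of \<open>B\<close> makes the defect \<open>Bx - sx \<ge> 0\<close> strictly positive.\<close>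
  define y where "y i = (\<Sum>j<n. B $$ (i, j) * x j)" for i
  have y: "\<forall>i<n. y i > 0" unfolding y_def using pos x n by (auto intro!: sum_pos)
  have "s * y i < (\<Sum>j<n. B $$ (i, j) * y j)" if i: "i < n" for i
  proof -
    have "0 < (\<Sum>j<n. B $$ (i, j) * (y j - s * x j))"
      using pos super strict i unfolding y_def by (intro sum_pos2[of _ i0]) (auto simp: less_imp_le)
    also have "\<dots> = (\<Sum>j<n. B $$ (i, j) * y j) - s * y i"
      unfolding y_def by (simp add: algebra_simps sum_subtractf sum_distrib_left)
    finally show ?thesis by simp
  qed
  thus ?thesis using rho_greater_of_strict_superinvariant[OF B _ y n] pos by (simp add: less_imp_le)
qed

lemma rho_less_of_subinvariant_positive:
  fixes B :: "real mat"
  assumes B: "B \<in> carrier_mat n n" and pos: "\<forall>i<n. \<forall>j<n. B $$ (i, j) > 0"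
    and x: "\<forall>i<n. x i > 0" and n: "n > 0"
    and sub: "\<forall>i<n. (\<Sum>j<n. B $$ (i, j) * x j) \<le> s * x i"
    and strict: "i0 < n" "(\<Sum>j<n. B $$ (i0, j) * x j) < s * x i0"
  shows "rho B < s"
proof -
  define y where "y i = (\<Sum>j<n. B $$ (i, j) * x j)" for i
  have y: "\<forall>i<n. y i > 0" unfolding y_def using pos x n by (auto intro!: sum_pos)
  have "(\<Sum>j<n. B $$ (i, j) * y j) < s * y i" if i: "i < n" for i
  proof -
    have "0 < (\<Sum>j<n. B $$ (i, j) * (s * x j - y j))"
      using pos sub strict i unfolding y_def by (intro sum_pos2[of _ i0]) (auto simp: less_imp_le)
    also have "\<dots> = s * y i - (\<Sum>j<n. B $$ (i, j) * y j)"
      unfolding y_def by (simp add: algebra_simps sum_subtractf sum_distrib_left)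
    finally show ?thesis by simp
  qed
  thus ?thesis using rho_less_of_strict_subinvariant[OF B _ y n] pos by (simp add: less_imp_le)
qed

lemma Omega_rho_greater_average:
  fixes A :: "real mat"
  assumes A: "A \<in> carrier_mat n n" and pos: "\<forall>i<n. \<forall>j<n. A $$ (i, j) > 0" and n: "n > 0"
    and "\<not> equal_row_sums n A" "\<not> constant_rows n A"
  obtains B where "B \<in> Omega n A" "(\<Sum>i<n. \<Sum>j<n. A $$ (i, j)) / real n < rho B"
proof -
  define r where "r i = (\<Sum>j<n. A $$ (i, j))" for i
  obtain j0 k0 where "j0 < n" "k0 < n" "r j0 \<noteq> r k0"
    using assms(4) unfolding equal_row_sums_def r_def by blast
  then obtain B i0 where B: "B \<in> Omega n A" "i0 < n" and cheb:
    "\<And>i. i < n \<Longrightarrow> (\<Sum>j<n. B $$ (i, j)) * (\<Sum>j<n. r j) \<le> real n * (\<Sum>j<n. B $$ (i, j) * r j)"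
    "(\<Sum>j<n. B $$ (i0, j)) * (\<Sum>j<n. r j) < real n * (\<Sum>j<n. B $$ (i0, j) * r j)"
    using Omega_chebyshev[OF A assms(5)] by blast
  have rows: "(\<Sum>j<n. B $$ (i, j)) = r i" if "i < n" for i
    using Omega_row_sum[OF B(1) that] unfolding r_def .
  have "(\<Sum>j<n. r j) / real n < rho B"
  proof (rule rho_greater_of_superinvariant_positive[OF Omega_carrier[OF B(1)] _ _ n _ B(2)])
    show "\<forall>i<n. \<forall>j<n. B $$ (i, j) > 0" using Omega_entry_pos[OF B(1) pos] by blast
    show "\<forall>i<n. r i > 0" unfolding r_def using pos n by (auto intro!: sum_pos)
    show "\<forall>i<n. (\<Sum>j<n. r j) / real n * r i \<le> (\<Sum>j<n. B $$ (i, j) * r j)"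
    proof (intro allI impI)
      fix i assume i: "i < n"
      have "r i * (\<Sum>j<n. r j) \<le> real n * (\<Sum>j<n. B $$ (i, j) * r j)"
        using cheb(1)[OF i] rows[OF i] by simp
      thus "(\<Sum>j<n. r j) / real n * r i \<le> (\<Sum>j<n. B $$ (i, j) * r j)"
        using n by (simp add: field_simps)
    qed
    have "r i0 * (\<Sum>j<n. r j) < real n * (\<Sum>j<n. B $$ (i0, j) * r j)"
      using cheb(2) rows[OF B(2)] by simp
    thus "(\<Sum>j<n. r j) / real n * r i0 < (\<Sum>j<n. B $$ (i0, j) * r j)"
      using n by (simp add: field_simps)
  qed
  thus thesis using that B(1) unfolding r_def by blast
qed

lemma Omega_rho_less_average:
  fixes A :: "real mat"
  assumes A: "A \<in> carrier_mat n n" and pos: "\<forall>i<n. \<forall>j<n. A $$ (i, j) > 0" and n: "n > 0"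
    and "\<not> equal_row_sums n A" "\<not> constant_rows n A"
  obtains B where "B \<in> Omega n A" "rho B < (\<Sum>i<n. \<Sum>j<n. A $$ (i, j)) / real n"
proof -
  define r where "r i = (\<Sum>j<n. A $$ (i, j))" for i
  obtain j0 k0 where "j0 < n" "k0 < n" "r j0 \<noteq> r k0"
    using assms(4) unfolding equal_row_sums_def r_def by blast
  then obtain B i0 where B: "B \<in> Omega n A" "i0 < n" and cheb:
    "\<And>i. i < n \<Longrightarrow> (\<Sum>j<n. B $$ (i, j)) * (\<Sum>j<n. - r j) \<le> real n * (\<Sum>j<n. B $$ (i, j) * - r j)"
    "(\<Sum>j<n. B $$ (i0, j)) * (\<Sum>j<n. - r j) < real n * (\<Sum>j<n. B $$ (i0, j) * - r j)"
    using Omega_chebyshev[OF A assms(5), of j0 k0 "\<lambda>j. - r j"] by auto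
  have rows: "(\<Sum>j<n. B $$ (i, j)) = r i" if "i < n" for i
    using Omega_row_sum[OF B(1) that] unfolding r_def .
  have "rho B < (\<Sum>j<n. r j) / real n"
  proof (rule rho_less_of_subinvariant_positive[OF Omega_carrier[OF B(1)] _ _ n _ B(2)])
    show "\<forall>i<n. \<forall>j<n. B $$ (i, j) > 0" using Omega_entry_pos[OF B(1) pos] by blast
    show "\<forall>i<n. r i > 0" unfolding r_def using pos n by (auto intro!: sum_pos)
    show "\<forall>i<n. (\<Sum>j<n. B $$ (i, j) * r j) \<le> (\<Sum>j<n. r j) / real n * r i"
    proof (intro allI impI)
      fix i assume i: "i < n"
      have "real n * (\<Sum>j<n. B $$ (i, j) * r j) \<le> r i * (\<Sum>j<n. r j)"
        using cheb(1)[OF i] rows[OF i] by (simp add: sum_negf)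
      thus "(\<Sum>j<n. B $$ (i, j) * r j) \<le> (\<Sum>j<n. r j) / real n * r i"
        using n by (simp add: field_simps)
    qed
    have "real n * (\<Sum>j<n. B $$ (i0, j) * r j) < r i0 * (\<Sum>j<n. r j)"
      using cheb(2) rows[OF B(2)] by (simp add: sum_negf)
    thus "(\<Sum>j<n. B $$ (i0, j) * r j) < (\<Sum>j<n. r j) / real n * r i0"
      using n by (simp add: field_simps)
  qed
  thus thesis using that B(1) unfolding r_def by blast
qed

lemma rho_Omega_image:
  fixes A :: "real mat"
  assumes A: "A \<in> carrier_mat n n" and pos: "\<forall>i<n. \<forall>j<n. A $$ (i, j) > 0" and n: "n > 0"
    and "equal_row_sums n A \<or> constant_rows n A"
  shows "rho ` Omega n A = {(\<Sum>i<n. \<Sum>j<n. A $$ (i, j)) / real n}"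
proof -
  have "rho ` Omega n A = (\<lambda>_. (\<Sum>i<n. \<Sum>j<n. A $$ (i, j)) / real n) ` Omega n A"
    by (rule image_cong) (simp_all add: rho_Omega_eq_average[OF assms])
  thus ?thesis using self_in_Omega[OF A] by (metis image_constant)
qed

lemma average_eq_Max_rho_Omega_iff:
  fixes A :: "real mat"
  assumes A: "A \<in> carrier_mat n n" and pos: "\<forall>i<n. \<forall>j<n. A $$ (i, j) > 0" and n: "n > 0"
  shows "(\<Sum>i<n. \<Sum>j<n. A $$ (i, j)) / real n = Max (rho ` Omega n A)
    \<longleftrightarrow> equal_row_sums n A \<or> constant_rows n A"
proof
  assume avg: "(\<Sum>i<n. \<Sum>j<n. A $$ (i, j)) / real n = Max (rho ` Omega n A)"
  show "equal_row_sums n A \<or> constant_rows n A"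
  proof (rule ccontr)
    assume "\<not> (equal_row_sums n A \<or> constant_rows n A)"
    then obtain B where "B \<in> Omega n A" "(\<Sum>i<n. \<Sum>j<n. A $$ (i, j)) / real n < rho B"
      using Omega_rho_greater_average[OF A pos n] by blast
    thus False using avg finite_Omega by (simp add: Max_ge leD)
  qed
qed (simp add: rho_Omega_image[OF A pos n])

lemma average_eq_Min_rho_Omega_iff:
  fixes A :: "real mat"
  assumes A: "A \<in> carrier_mat n n" and pos: "\<forall>i<n. \<forall>j<n. A $$ (i, j) > 0" and n: "n > 0"
  shows "(\<Sum>i<n. \<Sum>j<n. A $$ (i, j)) / real n = Min (rho ` Omega n A)
    \<longleftrightarrow> equal_row_sums n A \<or> constant_rows n A"
proof
  assume avg: "(\<Sum>i<n. \<Sum>j<n. A $$ (i, j)) / real n = Min (rho ` Omega n A)"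
  show "equal_row_sums n A \<or> constant_rows n A"
  proof (rule ccontr)
    assume "\<not> (equal_row_sums n A \<or> constant_rows n A)"
    then obtain B where "B \<in> Omega n A" "rho B < (\<Sum>i<n. \<Sum>j<n. A $$ (i, j)) / real n"
      using Omega_rho_less_average[OF A pos n] by blast
    thus False using avg finite_Omega by (simp add: Min_le leD)
  qed
qed (simp add: rho_Omega_image[OF A pos n])

section \<open>The two alternatives of condition (ii)\<close>

lemma ones_eigenvector_iff_equal_row_sums:
  fixes A :: "real mat"
  assumes A: "A \<in> carrier_mat n n" and pos: "\<forall>i<n. \<forall>j<n. A $$ (i, j) > 0" and n: "n > 0"
  shows "A *\<^sub>v vec n (\<lambda>_. 1) = rho A \<cdot>\<^sub>v vec n (\<lambda>_. 1) \<longleftrightarrow> equal_row_sums n A"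
proof -
  have row_sum: "(A *\<^sub>v vec n (\<lambda>_. 1)) $ i = (\<Sum>j<n. A $$ (i, j))" if "i < n" for i
    using index_mult_mat_vec_sum[OF A _ that, of "vec n (\<lambda>_. 1)"] that by simp
  have "A *\<^sub>v vec n (\<lambda>_. 1) = rho A \<cdot>\<^sub>v vec n (\<lambda>_. 1)
      \<longleftrightarrow> (\<forall>i<n. (A *\<^sub>v vec n (\<lambda>_. 1)) $ i = (rho A \<cdot>\<^sub>v vec n (\<lambda>_. 1)) $ i)"
    using A by (simp add: vec_eq_iff)
  also have "\<dots> \<longleftrightarrow> (\<forall>i<n. (\<Sum>j<n. A $$ (i, j)) = rho A)"
    using row_sum by simp
  also have "\<dots> \<longleftrightarrow> equal_row_sums n A"
  proof
    assume "equal_row_sums n A"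
    define r where "r = (\<Sum>j<n. A $$ (0, j))"
    hence rows: "\<forall>i<n. (\<Sum>j<n. A $$ (i, j)) = r"
      using \<open>equal_row_sums n A\<close> n unfolding equal_row_sums_def by blast
    hence "rho A = r" using rho_eq_row_sum[OF A _ n] pos by (simp add: less_imp_le)
    thus "\<forall>i<n. (\<Sum>j<n. A $$ (i, j)) = rho A" using rows by simp
  qed (simp add: equal_row_sums_def)
  finally show ?thesis .
qed

lemma diagonal_mat_mult_index:
  assumes D: "D \<in> carrier_mat n n" "diagonal_mat D" and A: "A \<in> carrier_mat n m"
    and ij: "i < n" "j < m"
  shows "(D * A) $$ (i, j) = D $$ (i, i) * A $$ (i, j)"
proof -
  have "(D * A) $$ (i, j) = (\<Sum>k<n. D $$ (i, k) * A $$ (k, j))"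
    by (rule index_mult_mat_sum[OF D(1) A ij])
  also have "\<dots> = (\<Sum>k<n. if k = i then D $$ (i, i) * A $$ (i, j) else 0)"
    using D ij unfolding diagonal_mat_def by (intro sum.cong) auto
  finally show ?thesis using ij by simp
qed

lemma diagonal_scaling_to_ones_iff_constant_rows:
  fixes A :: "real mat"
  assumes A: "A \<in> carrier_mat n n" and pos: "\<forall>i<n. \<forall>j<n. A $$ (i, j) > 0" and n: "n > 0"
  shows "(\<exists>D \<in> carrier_mat n n. diagonal_mat D \<and> (\<forall>i<n. D $$ (i, i) \<ge> 0) \<and> det D \<noteq> 0
      \<and> D * A = mat n n (\<lambda>_. 1)) \<longleftrightarrow> constant_rows n A"
proof
  assume "\<exists>D \<in> carrier_mat n n. diagonal_mat D \<and> (\<forall>i<n. D $$ (i, i) \<ge> 0) \<and> det D \<noteq> 0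
      \<and> D * A = mat n n (\<lambda>_. 1)"
  then obtain D where D: "D \<in> carrier_mat n n" "diagonal_mat D" "D * A = mat n n (\<lambda>_. 1)" by blast
  have "D $$ (i, i) * A $$ (i, j) = 1" if "i < n" "j < n" for i j
    using diagonal_mat_mult_index[OF D(1,2) A that] D(3) that by simp
  thus "constant_rows n A" unfolding constant_rows_def
    by (metis mult_cancel_left mult_zero_left zero_neq_one)
next
  assume const: "constant_rows n A"
  define D where "D = mat n n (\<lambda>(i, j). if i = j then 1 / A $$ (i, 0) else 0)"
  have D: "D \<in> carrier_mat n n" "diagonal_mat D" unfolding D_def diagonal_mat_def by auto
  have "det D = prod_list (diag_mat D)"
    by (rule det_upper_triangular[OF _ D(1)]) (simp add: upper_triangular_def D_def)
  moreover have "0 \<notin> set (diag_mat D)" unfolding diag_mat_def D_def using pos n by fastforce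
  ultimately have "det D \<noteq> 0" by simp
  moreover have "\<forall>i<n. D $$ (i, i) \<ge> 0" unfolding D_def using pos n by (simp add: less_imp_le)
  moreover have "D * A = mat n n (\<lambda>_. 1)"
  proof (rule eq_matI)
    fix i j assume "i < dim_row (mat n n (\<lambda>_. 1 :: real))" "j < dim_col (mat n n (\<lambda>_. 1 :: real))"
    hence ij: "i < n" "j < n" by auto
    have "A $$ (i, j) = A $$ (i, 0)" "A $$ (i, 0) > 0"
      using const pos ij n unfolding constant_rows_def by blast+
    thus "(D * A) $$ (i, j) = mat n n (\<lambda>_. 1) $$ (i, j)"
      using diagonal_mat_mult_index[OF D A ij] ij by (simp add: D_def)
  qed (use D A in auto)
  ultimately show "\<exists>D \<in> carrier_mat n n. diagonal_mat D \<and> (\<forall>i<n. D $$ (i, i) \<ge> 0) \<and> det D \<noteq> 0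
      \<and> D * A = mat n n (\<lambda>_. 1)" using D by blast
qed

theorem theorem3p2:
  fixes A :: "real mat" and n :: nat
  assumes "n \<ge> 1" and "A \<in> carrier_mat n n"
    and "\<forall>i<n. \<forall>j<n. A $$ (i, j) > 0"
  shows "((\<Sum>i<n. \<Sum>j<n. A $$ (i, j)) / real n = Max (rho ` Omega n A)
           \<longleftrightarrow> (A *\<^sub>v vec n (\<lambda>_. 1) = rho A \<cdot>\<^sub>v vec n (\<lambda>_. 1)
                \<or> (\<exists>D \<in> carrier_mat n n. diagonal_mat D \<and> (\<forall>i<n. D $$ (i, i) \<ge> 0) \<and> det D \<noteq> 0
                      \<and> D * A = mat n n (\<lambda>_. 1))))
       \<and> ((A *\<^sub>v vec n (\<lambda>_. 1) = rho A \<cdot>\<^sub>v vec n (\<lambda>_. 1)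
                \<or> (\<exists>D \<in> carrier_mat n n. diagonal_mat D \<and> (\<forall>i<n. D $$ (i, i) \<ge> 0) \<and> det D \<noteq> 0
                      \<and> D * A = mat n n (\<lambda>_. 1)))
           \<longleftrightarrow> (\<Sum>i<n. \<Sum>j<n. A $$ (i, j)) / real n = Min (rho ` Omega n A))"
proof -
  have n: "n > 0" using assms(1) by simp
  show ?thesis
    unfolding ones_eigenvector_iff_equal_row_sums[OF assms(2,3) n]
      diagonal_scaling_to_ones_iff_constant_rows[OF assms(2,3) n]
      average_eq_Max_rho_Omega_iff[OF assms(2,3) n] average_eq_Min_rho_Omega_iff[OF assms(2,3) n]
    by blast
qed

end
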